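(* Let $m,n$ be positive integers and $s,k$ even positive integers. There exists a ${}^2\mathrm{H}(m,n;s,k)$ if and only if $ms=nk$, $2\le s\le n$, $2\le k\le m$, and $s,k$ are not both equal to $2$.
   Context: For positive integers $m,n,s,k,\lambda,t$ with $t$ dividing $\frac{2nk}{\lambda}$, let $v=\frac{2nk}{\lambda}+t$ and $J$ the subgroup of $\mathbb{Z}_v$ of order $t$. A ${}^\lambda\mathrm{H}_t(m,n;s,k)$ is an $m\times n$ partially filled array with entries in $\mathbb{Z}_v$ such that: (a) each row has exactly $s$ and each column exactly $k$ filled cells; (b) the multiset $\{\pm x: x$ an entry of a filled cell$\}$ contains each element of $\mathbb{Z}_v\setminus J$ exactly $\lambda$ times and no element of $J$; (c) every row and every column sums to $0$ in $\mathbb{Z}_v$. The subscript $t$ is omitted when $t=1$, so ${}^2\mathrm{H}(m,n;s,k)$ is over $\mathbb{Z}_{nk+1}$. *)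

theory Defs
  imports Main "HOL-Library.Multiset"
begin

text \<open>An m x n partially filled array with entries in Z_v is modelled as
  A :: nat => nat => int option, where only the cells (i,j) with i < m, j < n
  matter; None means an empty cell, Some x a filled cell whose entry is the
  residue class of x, the representative being required to lie in {0..<v}.\<close>

definition heffter_v :: "nat \<Rightarrow> nat \<Rightarrow> nat \<Rightarrow> nat \<Rightarrow> nat" where
  "heffter_v lam t n k = 2 * n * k div lam + t"

definition filled_cells :: "nat \<Rightarrow> nat \<Rightarrow> (nat \<Rightarrow> nat \<Rightarrow> int option) \<Rightarrow> (nat \<times> nat) set" where
  "filled_cells m n A = {(i, j). i < m \<and> j < n \<and> A i j \<noteq> None}"

definition pm_entries :: "nat \<Rightarrow> nat \<Rightarrow> nat \<Rightarrow> (nat \<Rightarrow> nat \<Rightarrow> int option) \<Rightarrow> int multiset" where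
  "pm_entries v m n A =
     (\<Sum>c\<in>#mset_set (filled_cells m n A).
        {# the (A (fst c) (snd c)) mod int v, (- the (A (fst c) (snd c))) mod int v #})"

text \<open>J is the subgroup of Z_v of order t, i.e. the multiples of v/t.\<close>
definition heffter_array ::
  "nat \<Rightarrow> nat \<Rightarrow> nat \<Rightarrow> nat \<Rightarrow> nat \<Rightarrow> nat \<Rightarrow> (nat \<Rightarrow> nat \<Rightarrow> int option) \<Rightarrow> bool" where
  "heffter_array lam t m n s k A \<longleftrightarrow>
     (let v = heffter_v lam t n k in
       (\<forall>i<m. \<forall>j<n. \<forall>x. A i j = Some x \<longrightarrow> 0 \<le> x \<and> x < int v)
     \<and> (\<forall>i<m. card {j. j < n \<and> A i j \<noteq> None} = s)
     \<and> (\<forall>j<n. card {i. i < m \<and> A i j \<noteq> None} = k)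
     \<and> (\<forall>y\<in>{0..<int v}.
          count (pm_entries v m n A) y = (if int (v div t) dvd y then 0 else lam))
     \<and> (\<forall>i<m. (\<Sum>j<n. case A i j of None \<Rightarrow> 0 | Some x \<Rightarrow> x) mod int v = 0)
     \<and> (\<forall>j<n. (\<Sum>i<m. case A i j of None \<Rightarrow> 0 | Some x \<Rightarrow> x) mod int v = 0))"

definition exists_heffter :: "nat \<Rightarrow> nat \<Rightarrow> nat \<Rightarrow> nat \<Rightarrow> nat \<Rightarrow> nat \<Rightarrow> bool" where
  "exists_heffter lam t m n s k \<longleftrightarrow>
     lam dvd 2 * n * k \<and> t dvd (2 * n * k div lam) \<and> (\<exists>A. heffter_array lam t m n s k A)"

end

theory Submission
  imports Defs
begin

text \<open>Necessity: counting the filled cells by rows and by columns gives m s = n k. If s = k = 2,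
  let x, y be the entries of a row and z the other entry in the column of x; then y and z are both
  congruent to -x, so the residue of x occurs three times in the list of all +-entries, whereas
  every nonzero residue occurs exactly twice.

  Sufficiency: transposing, we may assume k \<ge> 4. The m s = n k cells are filled in the order
  p = 0, 1, ...: position p lies in row p div s and in a column that advances cyclically with p.
  Positions 2t and 2t+1 lie in the same row and carry -z t and z t, so the rows sum to 0.
  The n k / 2 pairs form k / 2 layers of n pairs, and in each layer the first cells of the pairs
  meet every column once. The value of a pair is affine in its column with a slope that depends
  only on the layer, and the slopes sum to 0; hence the sum of the z t over the pairs starting in
  a column does not depend on the column, and the two contributions to every column sum cancel.
  Finally, the values z t represent, up to sign modulo n k + 1, every residue 1, ..., n k / 2
  exactly once.\<close>

lemma heffter_v_2_1 [simp]: "heffter_v 2 1 n k = n * k + 1"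
  unfolding heffter_v_def by simp

lemma finite_filled_cells: "finite (filled_cells m n A)"
  unfolding filled_cells_def by (rule finite_subset[of _ "{..<m} \<times> {..<n}"]) auto

lemma filled_cells_transpose: "filled_cells m n (\<lambda>i j. B j i) = prod.swap ` filled_cells n m B"
  unfolding filled_cells_def by force

lemma card_filled_cells_transpose: "card (filled_cells m n (\<lambda>i j. B j i)) = card (filled_cells n m B)"
  unfolding filled_cells_transpose[of m n B] by (rule card_image) (auto simp: inj_on_def)

lemma pm_entries_transpose: "pm_entries v m n (\<lambda>i j. B j i) = pm_entries v n m B"
  unfolding pm_entries_def filled_cells_transpose[of m n B] sum_unfold_sum_mset[symmetric]
  by (subst sum.reindex) (auto simp: inj_on_def)

lemma heffter_array_transpose:
  assumes "heffter_array lam t n m k s B" "m * s = n * k"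
  shows "heffter_array lam t m n s k (\<lambda>i j. B j i)"
proof -
  define v where "v = heffter_v lam t n k"
  have "heffter_v lam t m s = v"
    unfolding v_def heffter_v_def using assms(2) by (simp add: mult.assoc)
  then show ?thesis
    using assms(1) unfolding heffter_array_def Let_def v_def[symmetric] pm_entries_transpose[of v m n B]
    by (elim conjE) (intro conjI; blast)
qed

lemma heffter_arrayD:
  assumes "heffter_array lam t m n s k A"
  defines "v \<equiv> heffter_v lam t n k"
  shows "\<And>i. i < m \<Longrightarrow> card {j. j < n \<and> A i j \<noteq> None} = s"
    and "\<And>j. j < n \<Longrightarrow> card {i. i < m \<and> A i j \<noteq> None} = k"
    and "\<And>y. y \<in> {0..<int v} \<Longrightarrow>
           count (pm_entries v m n A) y = (if int (v div t) dvd y then 0 else lam)"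
    and "\<And>i. i < m \<Longrightarrow> (\<Sum>j<n. case A i j of None \<Rightarrow> 0 | Some x \<Rightarrow> x) mod int v = 0"
    and "\<And>j. j < n \<Longrightarrow> (\<Sum>i<m. case A i j of None \<Rightarrow> 0 | Some x \<Rightarrow> x) mod int v = 0"
  using assms(1) unfolding heffter_array_def Let_def v_def[symmetric] by simp_all

lemma card_filled_cells_by_rows:
  "card (filled_cells m n A) = (\<Sum>i<m. card {j. j < n \<and> A i j \<noteq> None})"
proof -
  have "filled_cells m n A = Sigma {..<m} (\<lambda>i. {j. j < n \<and> A i j \<noteq> None})"
    unfolding filled_cells_def by auto
  then show ?thesis by simp
qed

lemma card_filled_cells_by_columns:
  "card (filled_cells m n A) = (\<Sum>j<n. card {i. i < m \<and> A i j \<noteq> None})"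
  using card_filled_cells_by_rows[of n m "\<lambda>j i. A i j"]
    card_filled_cells_transpose[of m n "\<lambda>j i. A i j"]
  by simp

lemma heffter_array_line_sizes:
  assumes "heffter_array lam t m n s k A"
  shows "m * s = n * k" and "0 < m \<Longrightarrow> s \<le> n" and "0 < n \<Longrightarrow> k \<le> m"
proof -
  note rows = heffter_arrayD(1)[OF assms] and cols = heffter_arrayD(2)[OF assms]
  have "card (filled_cells m n A) = (\<Sum>i<m. s)"
    unfolding card_filled_cells_by_rows by (intro sum.cong refl rows) simp
  moreover have "card (filled_cells m n A) = (\<Sum>j<n. k)"
    unfolding card_filled_cells_by_columns by (intro sum.cong refl cols) simp
  ultimately show "m * s = n * k"
    by simp
  show "s \<le> n" if "0 < m"
    using rows[OF that] card_mono[of "{..<n}" "{j. j < n \<and> A 0 j \<noteq> None}"] by auto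
  show "k \<le> m" if "0 < n"
    using cols[OF that] card_mono[of "{..<m}" "{i. i < m \<and> A i 0 \<noteq> None}"] by auto
qed

lemma sum_line_two_filled:
  fixes f :: "nat \<Rightarrow> int option"
  assumes "{j. j < n \<and> f j \<noteq> None} = {a, b}" "a \<noteq> b"
  shows "(\<Sum>j<n. case f j of None \<Rightarrow> 0 | Some x \<Rightarrow> x) = the (f a) + the (f b)"
proof -
  have ab: "a < n" "b < n" "f a \<noteq> None" "f b \<noteq> None"
    using assms(1) by blast+
  have "(\<Sum>j<n. case f j of None \<Rightarrow> 0 | Some x \<Rightarrow> x)
      = (\<Sum>j\<in>{a, b}. case f j of None \<Rightarrow> 0 | Some x \<Rightarrow> x)"
  proof (rule sum.mono_neutral_right)
    show "\<forall>j\<in>{..<n} - {a, b}. (case f j of None \<Rightarrow> 0 | Some x \<Rightarrow> x) = 0"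
    proof
      fix j
      assume "j \<in> {..<n} - {a, b}"
      then have "f j = None"
        using assms(1) by blast
      then show "(case f j of None \<Rightarrow> 0 | Some x \<Rightarrow> x) = 0"
        by simp
    qed
  qed (use ab in auto)
  also have "\<dots> = the (f a) + the (f b)"
    using ab assms(2) by (auto split: option.split)
  finally show ?thesis .
qed

lemma card_le_count_pm_entries:
  assumes "S \<subseteq> filled_cells m n A"
    and "\<And>i j. (i, j) \<in> S \<Longrightarrow> y \<in> {the (A i j) mod int v, (- the (A i j)) mod int v}"
  shows "card S \<le> count (pm_entries v m n A) y"
proof -
  let ?pm = "\<lambda>c. {#the (A (fst c) (snd c)) mod int v, (- the (A (fst c) (snd c))) mod int v#}"
  have "card S = (\<Sum>c\<in>S. 1)"
    by simp
  also have "\<dots> \<le> (\<Sum>c\<in>S. count (?pm c) y)"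
  proof (rule sum_mono)
    fix c
    assume "c \<in> S"
    then show "1 \<le> count (?pm c) y"
      using assms(2)[of "fst c" "snd c"] by (cases c) auto
  qed
  also have "\<dots> \<le> (\<Sum>c\<in>filled_cells m n A. count (?pm c) y)"
    using assms(1) finite_filled_cells by (intro sum_mono2) auto
  also have "\<dots> = count (pm_entries v m n A) y"
    unfolding pm_entries_def sum_unfold_sum_mset[symmetric] count_sum ..
  finally show ?thesis .
qed

lemma no_heffter_array_2_2:
  assumes "0 < m" "0 < n"
  shows "\<not> heffter_array 2 t m n 2 2 A"
proof
  assume H: "heffter_array 2 t m n 2 2 A"
  define v where "v = heffter_v 2 t n 2"
  have "0 < v"
    unfolding v_def heffter_v_def using assms by simp
  note rows = heffter_arrayD(1)[OF H] and cols = heffter_arrayD(2)[OF H]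
    and count = heffter_arrayD(3)[OF H, folded v_def]
    and row_sum = heffter_arrayD(4)[OF H, folded v_def]
    and col_sum = heffter_arrayD(5)[OF H, folded v_def]
  obtain j1 j2 where J: "{j. j < n \<and> A 0 j \<noteq> None} = {j1, j2}" "j1 \<noteq> j2"
    using rows[OF assms(1)] by (meson card_2_iff)
  then have j1: "j1 < n" "A 0 j1 \<noteq> None"
    by auto
  obtain i1 i2 where "{i. i < m \<and> A i j1 \<noteq> None} = {i1, i2}" "i1 \<noteq> i2"
    using cols[OF j1(1)] by (meson card_2_iff)
  moreover have "0 \<in> {i. i < m \<and> A i j1 \<noteq> None}"
    using assms(1) j1 by simp
  ultimately obtain i where I: "{i. i < m \<and> A i j1 \<noteq> None} = {0, i}" "0 \<noteq> i"
    by (metis insert_commute insert_iff singletonD)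
  define x where "x = the (A 0 j1)"
  have "(x + the (A 0 j2)) mod int v = 0"
    using row_sum[OF assms(1)] sum_line_two_filled[OF J] unfolding x_def by simp
  then have x2: "(- the (A 0 j2)) mod int v = x mod int v"
    by algebra
  have "(x + the (A i j1)) mod int v = 0"
    using col_sum[OF j1(1)] sum_line_two_filled[OF I] unfolding x_def by simp
  then have x3: "(- the (A i j1)) mod int v = x mod int v"
    by algebra
  have "card {(0, j1), (0, j2), (i, j1)} \<le> count (pm_entries v m n A) (x mod int v)"
  proof (rule card_le_count_pm_entries)
    show "{(0, j1), (0, j2), (i, j1)} \<subseteq> filled_cells m n A"
      using J(1) I(1) unfolding filled_cells_def by blast
    show "x mod int v \<in> {the (A a b) mod int v, (- the (A a b)) mod int v}"
      if "(a, b) \<in> {(0, j1), (0, j2), (i, j1)}" for a b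
      using that x2 x3 unfolding x_def by auto
  qed
  moreover have "card {(0, j1), (0, j2), (i, j1)} = 3"
    using J(2) I(2) by auto
  moreover have "x mod int v \<in> {0..<int v}"
    using \<open>0 < v\<close> by simp
  then have "count (pm_entries v m n A) (x mod int v) \<le> 2"
    using count[of "x mod int v"] by simp
  ultimately show False
    by linarith
qed

locale cell_placement =
  fixes L m n :: nat and cell :: "nat \<Rightarrow> nat \<times> nat" and val :: "nat \<Rightarrow> int" and v :: nat
  assumes inj_cell: "inj_on cell {..<L}"
    and cell_bound: "\<And>p. p < L \<Longrightarrow> fst (cell p) < m \<and> snd (cell p) < n"
    and v_pos: "0 < v"
begin

definition array :: "nat \<Rightarrow> nat \<Rightarrow> int option" where
  "array i j = (if (i, j) \<in> cell ` {..<L}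
     then Some (val (the_inv_into {..<L} cell (i, j)) mod int v) else None)"

lemma array_cell: "p < L \<Longrightarrow> array (fst (cell p)) (snd (cell p)) = Some (val p mod int v)"
  unfolding array_def using inj_cell by (simp add: the_inv_into_f_f)

lemma array_eq_None_iff: "array i j = None \<longleftrightarrow> (i, j) \<notin> cell ` {..<L}"
  unfolding array_def by simp

lemma array_range: "array i j = Some x \<Longrightarrow> 0 \<le> x \<and> x < int v"
  unfolding array_def using v_pos by (auto split: if_splits)

lemma cell_image_bound: "(i, j) \<in> cell ` {..<L} \<Longrightarrow> i < m \<and> j < n"
  using cell_bound by (metis image_iff lessThan_iff split_pairs2)

lemma filled_cells_array: "filled_cells m n array = cell ` {..<L}"
  unfolding filled_cells_def using cell_image_bound by (auto simp: array_eq_None_iff)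

lemma pm_entries_array:
  "pm_entries v m n array = (\<Sum>p<L. {#val p mod int v, (- val p) mod int v#})"
proof -
  have "pm_entries v m n array = (\<Sum>p<L. {#the (array (fst (cell p)) (snd (cell p))) mod int v,
                                          (- the (array (fst (cell p)) (snd (cell p)))) mod int v#})"
    unfolding pm_entries_def filled_cells_array sum_unfold_sum_mset[symmetric]
    using inj_cell by (simp add: sum.reindex)
  also have "\<dots> = (\<Sum>p<L. {#val p mod int v, (- val p) mod int v#})"
    by (intro sum.cong) (simp_all add: array_cell mod_minus_eq)
  finally show ?thesis .
qed

lemma row_array: "{j. j < n \<and> array i j \<noteq> None} = (snd \<circ> cell) ` {p. p < L \<and> fst (cell p) = i}"
proof (intro equalityI subsetI)
  fix j
  assume "j \<in> {j. j < n \<and> array i j \<noteq> None}"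
  then obtain p where "p < L" "cell p = (i, j)"
    by (auto simp: array_eq_None_iff)
  then show "j \<in> (snd \<circ> cell) ` {p. p < L \<and> fst (cell p) = i}"
    by (auto intro!: image_eqI[of _ _ p])
next
  fix j
  assume "j \<in> (snd \<circ> cell) ` {p. p < L \<and> fst (cell p) = i}"
  then obtain p where "p < L" "cell p = (i, j)"
    by (auto simp: prod_eq_iff)
  then show "j \<in> {j. j < n \<and> array i j \<noteq> None}"
    using cell_bound[of p] array_cell[of p] by auto
qed

lemma inj_on_row: "inj_on (snd \<circ> cell) {p. p < L \<and> fst (cell p) = i}"
  using inj_cell by (auto simp: inj_on_def prod_eq_iff)

lemma card_row: "card {j. j < n \<and> array i j \<noteq> None} = card {p. p < L \<and> fst (cell p) = i}"
  unfolding row_array by (rule card_image[OF inj_on_row])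

lemma sum_row:
  "(\<Sum>j<n. case array i j of None \<Rightarrow> 0 | Some x \<Rightarrow> x) = (\<Sum>p | p < L \<and> fst (cell p) = i. val p mod int v)"
proof -
  let ?entry = "\<lambda>j. case array i j of None \<Rightarrow> 0 | Some x \<Rightarrow> x"
  have "(\<Sum>j<n. ?entry j) = (\<Sum>j | j < n \<and> array i j \<noteq> None. ?entry j)"
    by (rule sum.mono_neutral_cong_right) auto
  also have "\<dots> = (\<Sum>p | p < L \<and> fst (cell p) = i. ?entry (snd (cell p)))"
    unfolding row_array sum.reindex[OF inj_on_row] by simp
  also have "\<dots> = (\<Sum>p | p < L \<and> fst (cell p) = i. val p mod int v)"
    by (rule sum.cong) (auto simp: array_cell)
  finally show ?thesis .
qed

lemma cell_placement_transpose: "cell_placement L n m (prod.swap \<circ> cell) v"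
  using inj_cell cell_bound v_pos by unfold_locales (auto simp: comp_inj_on)

lemma array_transpose: "cell_placement.array L (prod.swap \<circ> cell) val v j i = array i j"
proof -
  interpret T: cell_placement L n m "prod.swap \<circ> cell" val v
    by (rule cell_placement_transpose)
  show ?thesis
  proof (cases "(i, j) \<in> cell ` {..<L}")
    case True
    then obtain p where "p < L" "cell p = (i, j)"
      by auto
    then show ?thesis
      using array_cell[of p] T.array_cell[of p] by simp
  next
    case False
    moreover have "(j, i) \<notin> (prod.swap \<circ> cell) ` {..<L}"
      using False by (metis image_comp pair_in_swap_image)
    ultimately have "T.array j i = None" "array i j = None"
      by (simp_all add: T.array_eq_None_iff array_eq_None_iff)
    then show ?thesis
      by simp
  qed
qed

lemma card_column: "card {i. i < m \<and> array i j \<noteq> None} = card {p. p < L \<and> snd (cell p) = j}"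
proof -
  interpret T: cell_placement L n m "prod.swap \<circ> cell" val v
    by (rule cell_placement_transpose)
  show ?thesis
    using T.card_row[of j] by (simp add: array_transpose)
qed

lemma sum_column:
  "(\<Sum>i<m. case array i j of None \<Rightarrow> 0 | Some x \<Rightarrow> x) = (\<Sum>p | p < L \<and> snd (cell p) = j. val p mod int v)"
proof -
  interpret T: cell_placement L n m "prod.swap \<circ> cell" val v
    by (rule cell_placement_transpose)
  show ?thesis
    using T.sum_row[of j] by (simp add: array_transpose)
qed

end

lemma nat_mod_eq_imp_eq:
  fixes a b n :: nat
  assumes "a mod n = b mod n" "a < b + n" "b < a + n"
  shows "a = b"
proof (rule ccontr)
  assume "a \<noteq> b"
  have "int n dvd int a - int b"
    using assms(1) by (simp add: mod_eq_dvd_iff[symmetric] flip: of_nat_mod)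
  then have "int n \<le> \<bar>int a - int b\<bar>"
    using dvd_imp_le_int[of "int a - int b" "int n"] \<open>a \<noteq> b\<close> by simp
  then show False
    using assms(2,3) by linarith
qed

lemma block_div_eq: "t \<in> {l * n..<l * n + n} \<Longrightarrow> t div n = (l::nat)"
  by (metis atLeastLessThan_iff add.commute div_nat_eqI mult.commute mult_Suc_right)

lemma mem_own_block: "0 < n \<Longrightarrow> t \<in> {t div n * n..<t div n * n + (n::nat)}"
  by (metis atLeastLessThan_iff add.commute div_times_less_eq_dividend dividend_less_div_times)

lemma nat_mod_add_right_cancel: "((a::nat) + c) mod n = (b + c) mod n \<Longrightarrow> a mod n = b mod n"
  by (simp add: nat_mod_eq_iff)

lemma Suc_mod_eq_iff:
  fixes a j n :: nat
  assumes "a < n" "j < n"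
  shows "Suc a mod n = j \<longleftrightarrow> a = (j + n - 1) mod n"
proof (cases "j = 0")
  case True
  then show ?thesis
    using assms by (cases "Suc a = n") auto
next
  case False
  then have "(j + n - 1) mod n = j - 1"
    using assms(2) by (simp add: le_mod_geq)
  then show ?thesis
    using assms False by (cases "Suc a = n") auto
qed

text \<open>For even n the shift by p div n is needed: without it the even positions of n consecutive
  pairs would meet only the even columns.\<close>
definition diag_col :: "nat \<Rightarrow> nat \<Rightarrow> nat" where
  "diag_col n p = (if even n then (p + p div n) mod n else p mod n)"

lemma diag_col_less: "0 < n \<Longrightarrow> diag_col n p < n"
  unfolding diag_col_def by auto

lemma diag_col_Suc_double:
  assumes "0 < n"
  shows "diag_col n (Suc (2 * t)) = Suc (diag_col n (2 * t)) mod n"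
proof (cases "even n")
  case True
  then obtain h where "n = 2 * h"
    by blast
  then have "Suc (2 * t) div n = 2 * t div n"
    by (simp add: div_mult2_eq)
  then show ?thesis
    using True unfolding diag_col_def by (simp add: mod_Suc_eq)
next
  case False
  then show ?thesis
    unfolding diag_col_def by (simp add: mod_Suc_eq)
qed

lemma diag_col_eq_imp_eq:
  assumes eq: "diag_col n p = diag_col n p'" and "p \<le> p'" "p' < p + n"
    and "p' div n = p div n \<or> Suc p' < p + n"
  shows "p = p'"
proof (cases "even n")
  case False
  then have "p mod n = p' mod n"
    using eq unfolding diag_col_def by simp
  then show ?thesis
    by (rule nat_mod_eq_imp_eq) (use assms(2,3) in linarith)+
next
  case True
  let ?q = "p div n" and ?q' = "p' div n"
  have eq': "(p + ?q) mod n = (p' + ?q') mod n"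
    using eq True unfolding diag_col_def by simp
  have "?q \<le> ?q'" "?q' \<le> (p + n) div n"
    using assms(2,3) by (simp_all add: div_le_mono)
  moreover have "(p + n) div n = Suc ?q"
    using assms(2,3) by (simp add: div_add_self2)
  ultimately consider "?q' = ?q" | "?q' = Suc ?q"
    by linarith
  then show ?thesis
  proof cases
    case 1
    then have "p mod n = p' mod n"
      using eq' by (simp add: nat_mod_eq_iff)
    then show ?thesis
      by (rule nat_mod_eq_imp_eq) (use assms(2,3) in linarith)+
  next
    case 2
    then have "(p + n) mod n = Suc p' mod n"
      using eq' by (simp add: nat_mod_eq_iff)
    then have "p + n = Suc p'"
      by (rule nat_mod_eq_imp_eq) (use assms(2,3) in linarith)+
    then show ?thesis
      using 2 assms(4) by simp
  qed
qed

lemma diag_col_inj_on_block: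
  assumes "0 < s" "s \<le> n"
  shows "inj_on (diag_col n) {i * s..<i * s + s}"
proof -
  have "p = p'"
    if p: "p \<in> {i * s..<i * s + s}" and p': "p' \<in> {i * s..<i * s + s}" and "p \<le> p'"
      and "diag_col n p = diag_col n p'" for p p'
  proof (rule diag_col_eq_imp_eq)
    show "p' < p + n"
      using p p' assms(2) by auto
    show "p' div n = p div n \<or> Suc p' < p + n"
    proof (cases "s = n")
      case True
      then show ?thesis
        using block_div_eq[OF p] block_div_eq[OF p'] by simp
    next
      case False
      then show ?thesis
        using p p' assms(2) by auto
    qed
  qed fact+
  then show ?thesis
    by (metis inj_onI linorder_le_cases)
qed

lemma mod_double_cancel_odd:
  fixes t t' n :: nat
  assumes "odd n" "(2 * t) mod n = (2 * t') mod n"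
  shows "t mod n = t' mod n"
proof -
  have "int n dvd 2 * (int t - int t')"
    using assms(2) by (metis mod_eq_dvd_iff of_nat_mod right_diff_distrib of_nat_mult of_nat_numeral)
  moreover have "coprime (int n) 2"
    using assms(1) by (simp add: coprime_commute)
  ultimately have "int n dvd int t - int t'"
    using coprime_dvd_mult_right_iff by blast
  then show ?thesis
    by (metis mod_eq_dvd_iff of_nat_eq_iff of_nat_mod)
qed

text \<open>For even n = 2 h the parity of the column of 2 t is that of t div h, which separates the two
  halves of a layer.\<close>
lemma diag_col_double_eq_imp_eq_even:
  assumes h: "n = 2 * h" and t: "t \<in> {l * n..<l * n + n}" and t': "t' \<in> {l * n..<l * n + n}"
    and eq: "diag_col n (2 * t) = diag_col n (2 * t')"
  shows "t = t'"
proof -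
  have "0 < h"
    using h t by auto
  have half: "x div h = 2 * l \<or> x div h = Suc (2 * l)" if "x \<in> {l * n..<l * n + n}" for x
  proof -
    have "2 * l * h \<le> x" "x < (2 * l + 2) * h"
      using that unfolding h by (auto simp: algebra_simps)
    then have "2 * l \<le> x div h" "x div h < 2 * l + 2"
      using \<open>0 < h\<close> by (simp_all add: less_eq_div_iff_mult_less_eq div_less_iff_less_mult)
    then show ?thesis
      by linarith
  qed
  have col: "(2 * t + t div h) mod n = (2 * t' + t' div h) mod n"
    using eq h unfolding diag_col_def by (simp add: div_mult2_eq)
  have "t div h mod 2 = t' div h mod 2"
    using arg_cong[OF col, of "\<lambda>x. x mod 2"] unfolding h by (simp add: mod_mod_cancel)
  then have same_half: "t div h = t' div h"
    using half[OF t] half[OF t'] by fastforce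
  then have "(2 * t) mod n = (2 * t') mod n"
    using col by (metis nat_mod_add_right_cancel)
  then have "t mod h = t' mod h"
    unfolding h mod_mult_mult1 by simp
  then show ?thesis
    using same_half by (metis div_mult_mod_eq)
qed

lemma inj_on_card_eq_imp_bij_betw:
  assumes "inj_on f A" "f ` A \<subseteq> B" "finite B" "card A = card B"
  shows "bij_betw f A B"
  using assms by (metis bij_betw_def card_image card_subset_eq)

lemma bij_betw_diag_col_layer:
  assumes "0 < n"
  shows "bij_betw (\<lambda>t. diag_col n (2 * t)) {l * n..<l * n + n} {..<n}"
proof (rule inj_on_card_eq_imp_bij_betw)
  show "inj_on (\<lambda>t. diag_col n (2 * t)) {l * n..<l * n + n}"
  proof (rule inj_onI)
    fix t t'
    assume t: "t \<in> {l * n..<l * n + n}" and t': "t' \<in> {l * n..<l * n + n}"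
      and eq: "diag_col n (2 * t) = diag_col n (2 * t')"
    show "t = t'"
    proof (cases "even n")
      case False
      moreover have "(2 * t) mod n = (2 * t') mod n"
        using eq False unfolding diag_col_def by simp
      ultimately have "t mod n = t' mod n"
        by (rule mod_double_cancel_odd)
      then show ?thesis
        by (rule nat_mod_eq_imp_eq) (use t t' in auto)+
    next
      case True
      then obtain h where "n = 2 * h"
        by blast
      then show ?thesis
        using diag_col_double_eq_imp_eq_even t t' eq by blast
    qed
  qed
  show "(\<lambda>t. diag_col n (2 * t)) ` {l * n..<l * n + n} \<subseteq> {..<n}"
    using diag_col_less[OF assms] by auto
qed simp_all

lemma sum_lessThan_pairs: "(\<Sum>p<2 * N. f p) = (\<Sum>t<N. f (2 * t) + f (Suc (2 * t)))"
proof -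
  have "(\<Sum>t<N. sum f {t * 2..<t * 2 + 2}) = (\<Sum>p<N * 2. f p)"
    by (rule sum.nat_group)
  moreover have "sum f {t * 2..<t * 2 + 2} = f (2 * t) + f (Suc (2 * t))" for t
    by (simp add: mult.commute numeral_2_eq_2)
  ultimately show ?thesis
    by (simp add: mult.commute)
qed

lemma sum_over_layers:
  fixes f :: "nat \<Rightarrow> nat" and g :: "nat \<Rightarrow> 'a::comm_monoid_add"
  assumes "\<And>l. bij_betw f {l * n..<l * n + n} {..<n}" "c < n"
  shows "(\<Sum>t<T * n. if f t = c then g (t div n) else 0) = (\<Sum>l<T. g l)"
proof -
  have "(\<Sum>t<T * n. if f t = c then g (t div n) else 0)
      = (\<Sum>l<T. \<Sum>t\<in>{l * n..<l * n + n}. if f t = c then g l else 0)"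
    unfolding sum.nat_group[symmetric] by (intro sum.cong refl) (simp add: block_div_eq)
  also have "\<dots> = (\<Sum>l<T. \<Sum>c'<n. if c' = c then g l else 0)"
    by (intro sum.cong refl sum.reindex_bij_betw[OF assms(1)])
  also have "\<dots> = (\<Sum>l<T. g l)"
    using assms(2) by simp
  finally show ?thesis .
qed

lemma dvd_iff_eq_0_below:
  fixes y v :: int
  assumes "0 \<le> y" "y < v"
  shows "v dvd y \<longleftrightarrow> y = 0"
  using assms zdvd_not_zless[of y v] by (cases "y = 0") auto

definition odd_last_layer :: "nat \<Rightarrow> nat \<Rightarrow> bool" where
  "odd_last_layer T l \<longleftrightarrow> odd T \<and> l = T - 1"

definition odd_penultimate_layer :: "nat \<Rightarrow> nat \<Rightarrow> bool" where
  "odd_penultimate_layer T l \<longleftrightarrow> odd T \<and> l = T - 2"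

text \<open>Layer l of T layers carries the values layer_base n T l + layer_coeff T l * c, c < n,
  whose absolute values fill the block l n + 1, ..., l n + n. The slopes alternate between 1 and -1;
  when T is odd they would not cancel, so the last two layers get slopes 1 and -2; the values of
  the last layer lie in its block only up to sign modulo 2 T n + 1.\<close>

definition layer_coeff :: "nat \<Rightarrow> nat \<Rightarrow> int" where
  "layer_coeff T l =
     (if odd_last_layer T l then - 2 else if even l \<or> odd_penultimate_layer T l then 1 else - 1)"

definition layer_base :: "nat \<Rightarrow> nat \<Rightarrow> nat \<Rightarrow> int" where
  "layer_base n T l =
     (if odd_last_layer T l then int (l * n) + 2 * int n - 1
      else if even l then int (l * n) + 1
      else if odd_penultimate_layer T l then - int (l * n) - int n
      else int (l * n) + int n)"

definition pair_value :: "nat \<Rightarrow> nat \<Rightarrow> nat \<Rightarrow> nat \<Rightarrow> int" where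
  "pair_value n T l c = layer_base n T l + layer_coeff T l * int c"

definition pair_residue :: "nat \<Rightarrow> nat \<Rightarrow> nat \<Rightarrow> nat \<Rightarrow> int" where
  "pair_residue n T l c =
     (if odd_last_layer T l then
        (if n \<le> 2 * c + 1 then int (l * n) + 2 * int n - 1 - 2 * int c
         else int (l * n) + 2 + 2 * int c)
      else if even l then int (l * n) + int c + 1
      else int (l * n) + int n - int c)"

lemma sum_alternating_signs: "(\<Sum>l<2 * (u::nat). if even l then 1 else - 1 :: int) = 0"
  by (induction u) auto

lemma sum_layer_coeff:
  assumes "2 \<le> T"
  shows "(\<Sum>l<T. layer_coeff T l) = 0"
proof (cases "even T")
  case True
  then obtain u where "T = 2 * u"
    by blast
  then show ?thesis
    using sum_alternating_signs[of u]
    by (simp add: layer_coeff_def odd_last_layer_def odd_penultimate_layer_def)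
next
  case False
  define u where "u = (T - 3) div 2"
  have u: "T = 2 * u + 3"
    using False assms unfolding u_def by presburger
  have "(\<Sum>l<T. layer_coeff T l)
      = (\<Sum>l<2 * u. layer_coeff T l) + layer_coeff T (2 * u) + layer_coeff T (2 * u + 1)
        + layer_coeff T (2 * u + 2)"
    unfolding u by (simp add: numeral_3_eq_3)
  also have "(\<Sum>l<2 * u. layer_coeff T l) = (\<Sum>l<2 * u. if even l then 1 else - 1)"
    by (rule sum.cong) (auto simp: layer_coeff_def odd_last_layer_def odd_penultimate_layer_def u)
  finally show ?thesis
    using sum_alternating_signs[of u]
    by (simp add: layer_coeff_def odd_last_layer_def odd_penultimate_layer_def u)
qed

lemma sum_pair_value_layers:
  assumes "2 \<le> T"
  shows "(\<Sum>l<T. pair_value n T l c) = (\<Sum>l<T. layer_base n T l)"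
  using sum_layer_coeff[OF assms]
  by (simp add: pair_value_def sum.distrib flip: sum_distrib_right)

lemma pair_residue_bounds:
  assumes "c < n"
  shows "int (l * n) < pair_residue n T l c \<and> pair_residue n T l c \<le> int (l * n) + int n"
  using assms by (auto simp: pair_residue_def)

lemma inj_on_pair_residue: "inj_on (pair_residue n T l) {..<n}"
  by (auto simp: inj_on_def pair_residue_def split: if_splits) presburger+

lemma pair_value_cases:
  fixes n T l c :: nat
  assumes "l < T"
  defines "w \<equiv> pair_residue n T l c"
  shows "pair_value n T l c \<in> {w, int (2 * T * n + 1) - w, - w}"
proof -
  consider (last) "odd_last_layer T l"
    | (ascending) "\<not> odd_last_layer T l" "even l"
    | (negated) "\<not> odd_last_layer T l" "odd l" "odd_penultimate_layer T l"
    | (descending) "\<not> odd_last_layer T l" "odd l" "\<not> odd_penultimate_layer T l"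
    by blast
  then show ?thesis
  proof cases
    case last
    then have "T = l + 1"
      using assms(1) by (simp add: odd_last_layer_def)
    then have v: "int (2 * T * n + 1) = 2 * int (l * n) + 2 * int n + 1"
      by (simp add: algebra_simps)
    have "pair_value n T l c = int (l * n) + 2 * int n - 1 - 2 * int c"
      using last by (simp add: pair_value_def layer_base_def layer_coeff_def)
    moreover have "w = (if n \<le> 2 * c + 1 then int (l * n) + 2 * int n - 1 - 2 * int c
                         else int (l * n) + 2 + 2 * int c)"
      using last by (simp add: w_def pair_residue_def)
    ultimately show ?thesis
      using v by (cases "n \<le> 2 * c + 1") simp_all
  qed (simp_all add: w_def pair_value_def layer_base_def layer_coeff_def pair_residue_def)
qed

lemma mset_residue_pair:
  fixes z w v :: int
  assumes "0 < w" "w < v" "z \<in> {w, v - w, - w}"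
  shows "{#z mod v, (- z) mod v#} = {#w, v - w#}"
proof -
  have "w mod v = w" "(v - w) mod v = v - w" "(- w) mod v = v - w" "(- (v - w)) mod v = w"
    using assms(1,2) by (simp_all add: zmod_zminus1_eq_if mod_pos_pos_trivial)
  then show ?thesis
    using assms(3) by (auto simp: add_mset_commute)
qed

lemma sum_singleton_mset_inj: "inj_on f A \<Longrightarrow> (\<Sum>x\<in>A. {#f x#}) = mset_set (f ` A)"
  by (simp add: sum_unfold_sum_mset image_mset_mset_set)

lemma sum_mset_residue_pairs:
  fixes N :: int
  shows "(\<Sum>x\<in>{1..N}. {#x, 2 * N + 1 - x#}) = mset_set {1..2 * N}"
proof -
  have "(\<Sum>x\<in>{1..N}. {#x, 2 * N + 1 - x#}) = (\<Sum>x\<in>{1..N}. {#x#} + {#2 * N + 1 - x#})"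
    by (simp add: add_mset_commute)
  also have "\<dots> = mset_set {1..N} + mset_set ((\<lambda>x. 2 * N + 1 - x) ` {1..N})"
    unfolding sum.distrib
    using sum_singleton_mset_inj[of "\<lambda>x. 2 * N + 1 - x" "{1..N}"] by (simp add: inj_on_def)
  also have "(\<lambda>x. 2 * N + 1 - x) ` {1..N} = {N + 1..2 * N}"
    using image_diff_atLeastAtMost[of "2 * N + 1" 1 N] by simp
  also have "mset_set {1..N} + mset_set {N + 1..2 * N} = mset_set {1..2 * N}"
    by (subst mset_set_Union[symmetric]) (auto intro: arg_cong[where f = mset_set])
  finally show ?thesis .
qed

locale heffter_construction =
  fixes m n s k :: nat
  assumes even_s: "even s" and even_k: "even k"
    and s_ge_2: "2 \<le> s" and k_ge_4: "4 \<le> k" and s_le_n: "s \<le> n" and size_eq: "m * s = n * k"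
begin

definition T :: nat where "T = k div 2"

definition N :: nat where "N = T * n"

definition v :: nat where "v = n * k + 1"

definition pair_col :: "nat \<Rightarrow> nat" where "pair_col t = diag_col n (2 * t)"

definition z :: "nat \<Rightarrow> int" where "z t = pair_value n T (t div n) (pair_col t)"

definition w :: "nat \<Rightarrow> int" where "w t = pair_residue n T (t div n) (pair_col t)"

definition val :: "nat \<Rightarrow> int" where "val p = (if even p then - z (p div 2) else z (p div 2))"

definition cell :: "nat \<Rightarrow> nat \<times> nat" where "cell p = (p div s, diag_col n p)"

lemma k_eq: "k = 2 * T"
  using even_k unfolding T_def by simp

lemma T_ge_2: "2 \<le> T"
  using k_ge_4 k_eq by simp

lemma size_eq_pairs: "m * s = 2 * N"
  using size_eq k_eq unfolding N_def by simp

lemma v_eq: "v = 2 * N + 1"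
  using k_eq unfolding v_def N_def by simp

lemma s_pos: "0 < s"
  using s_ge_2 by simp

lemma n_pos: "0 < n"
  using s_ge_2 s_le_n by simp

sublocale placement: cell_placement "m * s" m n cell val v
proof
  show "inj_on cell {..<m * s}"
  proof (rule inj_onI)
    fix p p'
    assume "cell p = cell p'"
    then have "p div s = p' div s" "diag_col n p = diag_col n p'"
      unfolding cell_def by simp_all
    moreover have "p \<in> {p div s * s..<p div s * s + s}" "p' \<in> {p' div s * s..<p' div s * s + s}"
      using mem_own_block[OF s_pos] by auto
    ultimately show "p = p'"
      using diag_col_inj_on_block[OF s_pos s_le_n, of "p div s"] by (auto dest: inj_onD)
  qed
  show "fst (cell p) < m \<and> snd (cell p) < n" if "p < m * s" for p
    using that s_pos n_pos diag_col_less
    by (simp add: cell_def div_less_iff_less_mult mult.commute)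
  show "0 < v"
    unfolding v_def by simp
qed

lemma row_positions:
  assumes "i < m"
  shows "{p. p < m * s \<and> fst (cell p) = i} = {i * s..<i * s + s}"
proof -
  have "i * s + s \<le> m * s"
    using assms by (metis Suc_leI add.commute mult_Suc mult_le_mono1)
  moreover have "p div s = i \<longleftrightarrow> p \<in> {i * s..<i * s + s}" for p
    using block_div_eq[of p i s] mem_own_block[OF s_pos, of p] by blast
  ultimately show ?thesis
    unfolding cell_def by (intro set_eqI iffI) simp_all
qed

lemma sum_val_block: "even a \<Longrightarrow> (\<Sum>p\<in>{a..<a + 2 * u}. val p) = 0"
proof (induction u)
  case (Suc u)
  have "{a..<a + 2 * Suc u} = insert (Suc (a + 2 * u)) (insert (a + 2 * u) {a..<a + 2 * u})"
    by auto
  then show ?case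
    using Suc by (simp add: val_def)
qed simp

lemma sum_column_positions:
  assumes "j < n"
  shows "(\<Sum>p | p < m * s \<and> snd (cell p) = j. h p)
    = (\<Sum>t<N. (if pair_col t = j then h (2 * t) else 0)
              + (if pair_col t = (j + n - 1) mod n then h (Suc (2 * t)) else 0))"
proof -
  have positions: "{p. p < m * s \<and> snd (cell p) = j} = {p \<in> {..<2 * N}. diag_col n p = j}"
    unfolding size_eq_pairs cell_def by auto
  have "(\<Sum>p | p < m * s \<and> snd (cell p) = j. h p) = (\<Sum>p<2 * N. if diag_col n p = j then h p else 0)"
    unfolding positions by (rule sum.inter_filter) simp
  also have "\<dots> = (\<Sum>t<N. (if pair_col t = j then h (2 * t) else 0)
                           + (if pair_col t = (j + n - 1) mod n then h (Suc (2 * t)) else 0))"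
    unfolding sum_lessThan_pairs diag_col_Suc_double[OF n_pos] pair_col_def
    using Suc_mod_eq_iff[OF diag_col_less[OF n_pos] assms] by simp
  finally show ?thesis .
qed

lemma sum_over_pair_layers:
  "c < n \<Longrightarrow> (\<Sum>t<N. if pair_col t = c then g (t div n) else 0) = (\<Sum>l<T. g l)"
  unfolding N_def pair_col_def by (rule sum_over_layers[OF bij_betw_diag_col_layer[OF n_pos]])

lemma pred_col_less: "(j + n - 1) mod n < n"
  using n_pos by simp

lemma card_column_positions:
  assumes "j < n"
  shows "card {p. p < m * s \<and> snd (cell p) = j} = k"
proof -
  have "card {p. p < m * s \<and> snd (cell p) = j} = (\<Sum>p | p < m * s \<and> snd (cell p) = j. 1 :: nat)"
    by simp
  also have "\<dots> = (\<Sum>t<N. (if pair_col t = j then 1 else 0)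
                           + (if pair_col t = (j + n - 1) mod n then 1 else 0))"
    by (rule sum_column_positions[OF assms])
  also have "\<dots> = T + T"
    unfolding sum.distrib sum_over_pair_layers[OF assms, of "\<lambda>_. 1"]
      sum_over_pair_layers[OF pred_col_less, of _ "\<lambda>_. 1"]
    by simp
  finally show ?thesis
    using k_eq by simp
qed

lemma sum_val_column: "j < n \<Longrightarrow> (\<Sum>p | p < m * s \<and> snd (cell p) = j. val p) = 0"
proof -
  assume j: "j < n"
  have layers: "(\<Sum>t<N. if pair_col t = c then z t else 0) = (\<Sum>l<T. layer_base n T l)"
    if "c < n" for c
  proof -
    have "(\<Sum>t<N. if pair_col t = c then z t else 0)
        = (\<Sum>t<N. if pair_col t = c then pair_value n T (t div n) c else 0)"
      by (intro sum.cong refl) (simp add: z_def)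
    also have "\<dots> = (\<Sum>l<T. pair_value n T l c)"
      by (rule sum_over_pair_layers[OF that])
    also have "\<dots> = (\<Sum>l<T. layer_base n T l)"
      by (rule sum_pair_value_layers[OF T_ge_2])
    finally show ?thesis .
  qed
  have "(\<Sum>p | p < m * s \<and> snd (cell p) = j. val p)
      = - (\<Sum>t<N. if pair_col t = j then z t else 0)
        + (\<Sum>t<N. if pair_col t = (j + n - 1) mod n then z t else 0)"
    unfolding sum_column_positions[OF j] sum_negf[symmetric] sum.distrib[symmetric]
    by (intro sum.cong refl) (simp add: val_def)
  then show ?thesis
    using layers[OF j] layers[OF pred_col_less] by simp
qed

lemma w_bounds: "int ((t div n) * n) < w t \<and> w t \<le> int ((t div n) * n) + int n"
  unfolding w_def pair_col_def by (rule pair_residue_bounds[OF diag_col_less[OF n_pos]])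

lemma w_eq_imp_same_layer:
  assumes "w t = w t'"
  shows "t div n = t' div n"
proof -
  have "\<not> a div n < b div n" if "w a = w b" for a b
  proof
    assume "a div n < b div n"
    then have "(a div n) * n + n \<le> (b div n) * n"
      by (metis add.commute mult_Suc mult_le_mono1 Suc_leI)
    then show False
      using w_bounds[of a] w_bounds[of b] that by linarith
  qed
  then show ?thesis
    using assms by (metis linorder_neqE_nat)
qed

lemma inj_on_w: "inj_on w {..<N}"
proof (rule inj_onI)
  fix t t'
  assume "w t = w t'"
  then have layer: "t div n = t' div n"
    by (rule w_eq_imp_same_layer)
  then have "pair_col t = pair_col t'"
    using \<open>w t = w t'\<close> inj_onD[OF inj_on_pair_residue] diag_col_less[OF n_pos]
    unfolding w_def pair_col_def by simp
  moreover have "t \<in> {t div n * n..<t div n * n + n}" "t' \<in> {t div n * n..<t div n * n + n}"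
    using mem_own_block[OF n_pos] layer by metis+
  ultimately show "t = t'"
    using bij_betw_diag_col_layer[OF n_pos, of "t div n"]
    unfolding pair_col_def bij_betw_def by (auto dest: inj_onD)
qed

lemma w_range: "t < N \<Longrightarrow> w t \<in> {1..int N}"
proof -
  assume "t < N"
  then have "(t div n) * n + n \<le> N"
    unfolding N_def using n_pos
    by (metis add.commute div_less_iff_less_mult mult_Suc mult_le_mono1 Suc_leI)
  then have "int (t div n * n) + int n \<le> int N"
    by (metis of_nat_add of_nat_le_iff)
  then show "w t \<in> {1..int N}"
    using w_bounds[of t] unfolding atLeastAtMost_iff by linarith
qed

lemma bij_betw_w: "bij_betw w {..<N} {1..int N}"
  using inj_on_w w_range by (intro inj_on_card_eq_imp_bij_betw) auto

lemma mset_z_pair: "t < N \<Longrightarrow> {#z t mod int v, (- z t) mod int v#} = {#w t, int v - w t#}"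
proof (rule mset_residue_pair)
  assume "t < N"
  then have "t div n < T"
    unfolding N_def using n_pos by (simp add: div_less_iff_less_mult)
  moreover have "v = 2 * T * n + 1"
    unfolding v_eq N_def by (simp add: mult.assoc)
  ultimately show "z t \<in> {w t, int v - w t, - w t}"
    using pair_value_cases[of "t div n" T n "pair_col t"] unfolding z_def w_def by simp
  have "w t \<in> {1..int N}"
    using w_range[OF \<open>t < N\<close>] .
  then show "0 < w t" "w t < int v"
    unfolding v_eq by simp_all
qed

lemma pm_entries_array:
  "pm_entries v m n placement.array = mset_set {1..int (2 * N)} + mset_set {1..int (2 * N)}"
proof -
  have "int v = 2 * int N + 1"
    unfolding v_eq by simp
  then have "(\<Sum>t<N. {#w t, int v - w t#}) = (\<Sum>x\<in>{1..int N}. {#x, 2 * int N + 1 - x#})"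
    using sum.reindex_bij_betw[OF bij_betw_w, of "\<lambda>x. {#x, 2 * int N + 1 - x#}"] by (simp only:)
  also have "\<dots> = mset_set {1..int (2 * N)}"
    by (simp add: sum_mset_residue_pairs)
  finally have pairs: "(\<Sum>t<N. {#w t, int v - w t#}) = mset_set {1..int (2 * N)}" .
  have "pm_entries v m n placement.array = (\<Sum>p<m * s. {#val p mod int v, (- val p) mod int v#})"
    by (rule placement.pm_entries_array)
  also have "\<dots> = (\<Sum>t<N. {#w t, int v - w t#} + {#w t, int v - w t#})"
    unfolding size_eq_pairs sum_lessThan_pairs
    by (intro sum.cong refl) (simp add: val_def mset_z_pair add_mset_commute)
  finally show ?thesis
    unfolding sum.distrib pairs .
qed

theorem is_heffter_array: "heffter_array 2 1 m n s k placement.array"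
  unfolding heffter_array_def Let_def heffter_v_2_1 v_def[symmetric]
proof (intro conjI allI impI ballI)
  show "0 \<le> x" "x < int v" if "placement.array i j = Some x" for i j x
    using placement.array_range[OF that] by simp_all
  show "card {j. j < n \<and> placement.array i j \<noteq> None} = s" if "i < m" for i
    unfolding placement.card_row row_positions[OF that] by simp
  show "card {i. i < m \<and> placement.array i j \<noteq> None} = k" if "j < n" for j
    unfolding placement.card_column card_column_positions[OF that] ..
  show "count (pm_entries v m n placement.array) y = (if int (v div 1) dvd y then 0 else 2)"
    if "y \<in> {0..<int v}" for y
  proof -
    have "count (pm_entries v m n placement.array) y = (if y \<in> {1..int (2 * N)} then 2 else 0)"
      unfolding pm_entries_array by simp
    moreover have "int v = 2 * int N + 1"
      unfolding v_eq by simp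
    ultimately show ?thesis
      using that dvd_iff_eq_0_below[of y "int v"] by auto
  qed
  show "(\<Sum>j<n. case placement.array i j of None \<Rightarrow> 0 | Some x \<Rightarrow> x) mod int v = 0" if "i < m" for i
  proof -
    obtain u where "s = 2 * u"
      using even_s by blast
    moreover have "even (i * s)"
      using even_s by simp
    ultimately show ?thesis
      unfolding placement.sum_row row_positions[OF that] mod_sum_eq
      using sum_val_block[of "i * s" u] by simp
  qed
  show "(\<Sum>i<m. case placement.array i j of None \<Rightarrow> 0 | Some x \<Rightarrow> x) mod int v = 0" if "j < n" for j
    unfolding placement.sum_column mod_sum_eq sum_val_column[OF that] by simp
qed

end

lemma ex_heffter_array_2_1:
  assumes "even s" "even k" "2 \<le> s" "4 \<le> k" "s \<le> n" "m * s = n * k"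
  shows "\<exists>A. heffter_array 2 1 m n s k A"
proof -
  interpret heffter_construction m n s k
    using assms by unfold_locales
  show ?thesis
    using is_heffter_array by blast
qed

theorem theorem4:
  fixes m n s k :: nat
  assumes "0 < m" "0 < n" "0 < s" "0 < k" "even s" "even k"
  shows "exists_heffter 2 1 m n s k \<longleftrightarrow>
           m * s = n * k \<and> 2 \<le> s \<and> s \<le> n \<and> 2 \<le> k \<and> k \<le> m \<and> \<not> (s = 2 \<and> k = 2)"
proof
  assume "exists_heffter 2 1 m n s k"
  then obtain A where A: "heffter_array 2 1 m n s k A"
    unfolding exists_heffter_def by blast
  have "2 \<le> s" "2 \<le> k"
    using assms(3-6) by presburger+
  moreover have "\<not> (s = 2 \<and> k = 2)"
    using A no_heffter_array_2_2[OF assms(1,2)] by blast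
  ultimately show "m * s = n * k \<and> 2 \<le> s \<and> s \<le> n \<and> 2 \<le> k \<and> k \<le> m \<and> \<not> (s = 2 \<and> k = 2)"
    using heffter_array_line_sizes[OF A] assms(1,2) by blast
next
  assume sizes: "m * s = n * k \<and> 2 \<le> s \<and> s \<le> n \<and> 2 \<le> k \<and> k \<le> m \<and> \<not> (s = 2 \<and> k = 2)"
  have "\<exists>A. heffter_array 2 1 m n s k A"
  proof (cases "4 \<le> k")
    case True
    then show ?thesis
      using ex_heffter_array_2_1 assms sizes by blast
  next
    case False
    then have "4 \<le> s"
      using sizes assms(5,6) by presburger
    then obtain B where "heffter_array 2 1 n m k s B"
      using ex_heffter_array_2_1[of k s m n] assms sizes by (metis mult.commute)
    then show ?thesis
      using heffter_array_transpose sizes by blast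
  qed
  then show "exists_heffter 2 1 m n s k"
    unfolding exists_heffter_def by simp
qed

end
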